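(* Let $n \geq 1$ and $m \geq 3$ be integers. The corona graph $P_n \circ C_m$ is a total edge product cordial graph.
   Context: All graphs are finite and simple. $P_k$ denotes the path on $k$ vertices and $C_k$ the cycle on $k$ vertices. For graphs $G$ and $H$ with $V(G)=\{u_1,\dots,u_n\}$, the corona graph $G \circ H$ is obtained by taking one copy of $G$ and $n$ disjoint copies $H^1,\dots,H^n$ of $H$, and joining each vertex $u_i$ by an edge to every vertex of $H^i$. Given an edge labeling $f^*: E(G) \to \{0,1\}$, the induced vertex labeling $f: V(G)\to\{0,1\}$ is $f(v) = \prod\{f^*(uv) : uv \in E(G)\}$ (product of the labels of edges incident to $v$). Let $v_f(i)$ be the number of vertices with $f(v)=i$ and $e_f(i)$ the number of edges with $f^*(e)=i$, for $i=0,1$. The labeling $f^*$ is a total edge product cordial labeling if $|(v_f(0)+e_f(0)) - (v_f(1)+e_f(1))| \leq 1$, and a graph is total edge product cordial if it admits such a labeling. *)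

theory Defs
  imports Main
begin

type_synonym 'a graph = "'a set \<times> 'a set set"

definition simple_graph :: "'a graph \<Rightarrow> bool" where
  "simple_graph G \<longleftrightarrow> finite (fst G) \<and> (\<forall>e \<in> snd G. e \<subseteq> fst G \<and> card e = 2)"

definition path_graph :: "nat \<Rightarrow> nat graph" where
  "path_graph k = ({..<k}, {{i, Suc i} | i. Suc i < k})"

text \<open>Cycle C_k on vertices 0..k-1 (meaningful for k \<ge> 3).\<close>
definition cycle_graph :: "nat \<Rightarrow> nat graph" where
  "cycle_graph k = ({..<k}, {{i, (Suc i) mod k} | i. i < k})"

text \<open>Corona G o H: vertex u of G is represented by Inl u, and vertex w of the copy H^u
  attached to u is represented by Inr (u, w).\<close>
definition corona :: "'a graph \<Rightarrow> 'b graph \<Rightarrow> ('a + 'a \<times> 'b) graph" where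
  "corona G H =
    (Inl ` fst G \<union> {Inr (u, w) | u w. u \<in> fst G \<and> w \<in> fst H},
     (\<lambda>e. Inl ` e) ` snd G
     \<union> {{Inr (u, w1), Inr (u, w2)} | u w1 w2. u \<in> fst G \<and> {w1, w2} \<in> snd H}
     \<union> {{Inl u, Inr (u, w)} | u w. u \<in> fst G \<and> w \<in> fst H})"

definition induced_vertex_label :: "'a graph \<Rightarrow> ('a set \<Rightarrow> nat) \<Rightarrow> 'a \<Rightarrow> nat" where
  "induced_vertex_label G fs v = (\<Prod>e \<in> {e \<in> snd G. v \<in> e}. fs e)"

definition total_edge_product_cordial_labeling :: "'a graph \<Rightarrow> ('a set \<Rightarrow> nat) \<Rightarrow> bool" where
  "total_edge_product_cordial_labeling G fs \<longleftrightarrow>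
     (\<forall>e \<in> snd G. fs e \<in> {0, 1}) \<and>
     (let f = induced_vertex_label G fs;
          vf = (\<lambda>i. card {v \<in> fst G. f v = i});
          ef = (\<lambda>i. card {e \<in> snd G. fs e = i})
      in \<bar>(int (vf 0) + int (ef 0)) - (int (vf 1) + int (ef 1))\<bar> \<le> 1)"

definition total_edge_product_cordial :: "'a graph \<Rightarrow> bool" where
  "total_edge_product_cordial G \<longleftrightarrow> (\<exists>fs. total_edge_product_cordial_labeling G fs)"

end

theory Submission
  imports Defs
begin

text \<open>Label a set Z of edges by 0 and all other edges by 1. Then exactly the vertices
  covered by Z receive label 0, so the labeling is total edge product cordial as soon as
  twice the number of covered vertices and zero edges is within 1 of the total number of
  vertices and edges. In P_n o C_m take for Z, in every copy of C_m, the first j cycle edges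
  (covering the cycle vertices 0..j) and the spokes to the cycle vertices below s \<le> j + 1,
  together with the first p edges of the path. This covers n (j + 2) vertices with
  n (j + s) + p edges, out of 3nm + 2n - 1 vertices and edges in total. With
  j = m div 2, s = (m - 1) div 2 the balance is 1 for even m, and -n + 2p + 1 for odd m,
  which p = n div 2 brings into {0, 1}.\<close>

definition vanishing_on :: "'a set set \<Rightarrow> 'a set \<Rightarrow> nat" where
  "vanishing_on Z e = (if e \<in> Z then 0 else 1)"

lemma induced_vertex_label_vanishing_on:
  assumes "finite E" "Z \<subseteq> E"
  shows "induced_vertex_label (V, E) (vanishing_on Z) v = (if v \<in> \<Union>Z then 0 else 1)"
proof (cases "v \<in> \<Union>Z")
  case True
  then obtain e where "e \<in> Z" "v \<in> e" by blast
  with assms have "(\<Prod>e \<in> {e \<in> E. v \<in> e}. vanishing_on Z e) = 0"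
    by (intro prod_zero) (auto simp: vanishing_on_def)
  with True show ?thesis unfolding induced_vertex_label_def by simp
next
  case False
  then have "(\<Prod>e \<in> {e \<in> E. v \<in> e}. vanishing_on Z e) = 1"
    by (intro prod.neutral) (auto simp: vanishing_on_def)
  with False show ?thesis unfolding induced_vertex_label_def by simp
qed

lemma total_edge_product_cordial_labeling_vanishing_on_iff:
  assumes "finite V" "finite E" "Z \<subseteq> E"
  shows "total_edge_product_cordial_labeling (V, E) (vanishing_on Z) \<longleftrightarrow>
    \<bar>2 * (int (card (V \<inter> \<Union>Z)) + int (card Z)) - (int (card V) + int (card E))\<bar> \<le> 1"
proof -
  have label: "induced_vertex_label (V, E) (vanishing_on Z) v = (if v \<in> \<Union>Z then 0 else 1)"
    for v using induced_vertex_label_vanishing_on[OF assms(2,3)] .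
  have "{v \<in> V. induced_vertex_label (V, E) (vanishing_on Z) v = 0} = V \<inter> \<Union>Z"
    "{v \<in> V. induced_vertex_label (V, E) (vanishing_on Z) v = 1} = V - \<Union>Z"
    "{e \<in> E. vanishing_on Z e = 0} = Z" "{e \<in> E. vanishing_on Z e = 1} = E - Z"
    using assms(3) by (auto simp: label vanishing_on_def)
  moreover have "card (V - \<Union>Z) = card V - card (V \<inter> \<Union>Z)" "card (V \<inter> \<Union>Z) \<le> card V"
    using assms(1) by (simp_all add: card_Diff_subset_Int card_mono)
  moreover have "card (E - Z) = card E - card Z" "card Z \<le> card E"
    using assms(2,3) by (simp_all add: card_Diff_subset card_mono finite_subset)
  ultimately show ?thesis
    unfolding total_edge_product_cordial_labeling_def Let_def
    by (simp add: vanishing_on_def of_nat_diff algebra_simps)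
qed

definition path_edges :: "nat \<Rightarrow> (nat + nat \<times> nat) set set" where
  "path_edges k = (\<lambda>i. {Inl i, Inl (Suc i)}) ` {..<k}"

definition cycle_copy_edges :: "nat \<Rightarrow> nat \<Rightarrow> nat \<Rightarrow> (nat + nat \<times> nat) set set" where
  "cycle_copy_edges n m r = (\<lambda>(u, i). {Inr (u, i), Inr (u, Suc i mod m)}) ` ({..<n} \<times> {..<r})"

definition spoke_edges :: "nat \<Rightarrow> nat \<Rightarrow> (nat + nat \<times> nat) set set" where
  "spoke_edges n r = (\<lambda>(u, w). {Inl u, Inr (u, w)}) ` ({..<n} \<times> {..<r})"

lemma vertices_corona_path_cycle:
  "fst (corona (path_graph n) (cycle_graph m)) = {..<n} <+> {..<n} \<times> {..<m}"
  by (auto simp: corona_def path_graph_def cycle_graph_def Plus_def)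

lemma edges_corona_path_cycle:
  "snd (corona (path_graph n) (cycle_graph m)) =
    path_edges (n - 1) \<union> cycle_copy_edges n m m \<union> spoke_edges n m"
proof -
  have "{{i, Suc i} | i. Suc i < n} = (\<lambda>i. {i, Suc i}) ` {..<n - 1}"
    by auto
  then have "(\<lambda>e. Inl ` e) ` {{i, Suc i} | i. Suc i < n} = path_edges (n - 1)"
    unfolding path_edges_def by (simp add: image_image)
  moreover have "{{Inr (u, w1), Inr (u, w2)} | u w1 w2.
      u \<in> {..<n} \<and> {w1, w2} \<in> {{i, Suc i mod m} | i. i < m}} = cycle_copy_edges n m m"
    unfolding cycle_copy_edges_def by (auto simp: image_iff doubleton_eq_iff)
  moreover have "{{Inl u, Inr (u, w)} | u w. u \<in> {..<n} \<and> w \<in> {..<m}} = spoke_edges n m"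
    unfolding spoke_edges_def by auto
  ultimately show ?thesis
    unfolding corona_def path_graph_def cycle_graph_def by simp
qed

lemma card_path_edges: "card (path_edges k) = k"
proof -
  have "inj_on (\<lambda>i. {Inl i, Inl (Suc i)} :: (nat + nat \<times> nat) set) {..<k}"
    by (auto simp: inj_on_def doubleton_eq_iff)
  then show ?thesis unfolding path_edges_def by (simp add: card_image)
qed

lemma card_spoke_edges: "card (spoke_edges n r) = n * r"
proof -
  have "inj_on (\<lambda>(u, w). {Inl u, Inr (u, w)} :: (nat + nat \<times> nat) set) ({..<n} \<times> {..<r})"
    by (auto simp: inj_on_def doubleton_eq_iff)
  then show ?thesis unfolding spoke_edges_def by (simp add: card_image card_cartesian_product)
qed

text \<open>The hypothesis m \<ge> 3 is needed: for m = 2 the two edges of a copy of C_m coincide.\<close>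
lemma card_cycle_copy_edges:
  assumes "m \<ge> 3" "r \<le> m"
  shows "card (cycle_copy_edges n m r) = n * r"
proof -
  have "inj_on (\<lambda>(u, i). {Inr (u, i), Inr (u, Suc i mod m)} :: (nat + nat \<times> nat) set)
      ({..<n} \<times> {..<r})"
  proof (rule inj_onI, clarsimp)
    fix u i u' i'
    assume "i < r" "i' < r"
      and "{Inr (u, i), Inr (u, Suc i mod m)} = {Inr (u', i'), Inr (u', Suc i' mod m)}"
    then have "u = u'" "i = i' \<or> i = Suc i' mod m \<and> Suc i mod m = i'" "i < m" "i' < m"
      using assms(2) by (auto simp: doubleton_eq_iff)
    then show "u = u' \<and> i = i'"
      using assms(1) by (auto simp: mod_Suc split: if_splits)
  qed
  then show ?thesis
    unfolding cycle_copy_edges_def by (simp add: card_image card_cartesian_product)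
qed

lemma corona_edge_families_disjoint:
  "path_edges k \<inter> cycle_copy_edges n m r = {}"
  "path_edges k \<inter> spoke_edges n s = {}"
  "cycle_copy_edges n m r \<inter> spoke_edges n s = {}"
  unfolding path_edges_def cycle_copy_edges_def spoke_edges_def by (auto simp: doubleton_eq_iff)

lemma card_corona_edge_families:
  "card (path_edges k \<union> cycle_copy_edges n m r \<union> spoke_edges n s) =
    card (path_edges k) + card (cycle_copy_edges n m r) + card (spoke_edges n s)"
  using corona_edge_families_disjoint
  by (simp add: card_Un_disjoint Int_Un_distrib2 path_edges_def cycle_copy_edges_def spoke_edges_def)

lemma Union_path_edges_subset: "k < n \<Longrightarrow> \<Union>(path_edges k) \<subseteq> Inl ` {..<n}"
  unfolding path_edges_def by auto

lemma Union_spoke_edges: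
  "r \<ge> 1 \<Longrightarrow> \<Union>(spoke_edges n r) = Inl ` {..<n} \<union> Inr ` ({..<n} \<times> {..<r})"
  unfolding spoke_edges_def by (auto intro!: bexI[of _ "(_, 0)"] simp: Suc_le_eq)

lemma Union_cycle_copy_edges:
  assumes "1 \<le> j" "j < m"
  shows "\<Union>(cycle_copy_edges n m j) = Inr ` ({..<n} \<times> {..j})"
proof
  show "\<Union>(cycle_copy_edges n m j) \<subseteq> Inr ` ({..<n} \<times> {..j})"
    using assms unfolding cycle_copy_edges_def by auto
  show "Inr ` ({..<n} \<times> {..j}) \<subseteq> \<Union>(cycle_copy_edges n m j)"
  proof clarify
    fix u w assume "u < n" "w \<le> j"
    have "Suc (j - 1) mod m = j" using assms by simp
    with \<open>w \<le> j\<close> assms have "\<exists>i<j. w = i \<or> w = Suc i mod m"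
      by (cases "w < j") (blast, auto intro!: exI[of _ "j - 1"])
    with \<open>u < n\<close> show "Inr (u, w) \<in> \<Union>(cycle_copy_edges n m j)"
      unfolding cycle_copy_edges_def by auto
  qed
qed

lemma total_edge_product_cordial_corona_path_cycle_if_balanced:
  assumes "n \<ge> 1" "m \<ge> 3" "1 \<le> j" "j < m" "1 \<le> s" "s \<le> Suc j" "p < n"
    and balanced: "\<bar>int n * (4 * int j + 2 * int s + 2 - 3 * int m) + 2 * int p + 1\<bar> \<le> 1"
  shows "total_edge_product_cordial (corona (path_graph n) (cycle_graph m))"
proof -
  define V where "V = {..<n} <+> {..<n} \<times> {..<m}"
  define E where "E = path_edges (n - 1) \<union> cycle_copy_edges n m m \<union> spoke_edges n m"
  define Z where "Z = path_edges p \<union> cycle_copy_edges n m j \<union> spoke_edges n s"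
  have "Z \<subseteq> E"
    using assms unfolding Z_def E_def path_edges_def cycle_copy_edges_def spoke_edges_def
    by auto
  have "\<Union>Z = {..<n} <+> {..<n} \<times> {..j}"
    using Union_path_edges_subset[of p n] Union_cycle_copy_edges[of j m n] Union_spoke_edges[of s n] assms
    unfolding Z_def Plus_def by auto
  then have covered: "V \<inter> \<Union>Z = {..<n} <+> {..<n} \<times> {..j}"
    using assms unfolding V_def by auto
  have "finite V" "finite E"
    unfolding V_def E_def path_edges_def cycle_copy_edges_def spoke_edges_def by auto
  have "card V = n + n * m"
    unfolding V_def by (simp add: card_Plus card_cartesian_product)
  moreover have "card (V \<inter> \<Union>Z) = n + n * Suc j"
    unfolding covered by (simp add: card_Plus card_cartesian_product)
  moreover have "card E = (n - 1) + n * m + n * m" "card Z = p + n * j + n * s"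
    using assms unfolding E_def Z_def card_corona_edge_families
    by (simp_all add: card_path_edges card_cycle_copy_edges card_spoke_edges)
  ultimately have
    "2 * (int (card (V \<inter> \<Union>Z)) + int (card Z)) - (int (card V) + int (card E)) =
      int n * (4 * int j + 2 * int s + 2 - 3 * int m) + 2 * int p + 1"
    using assms(1) by (simp add: of_nat_diff algebra_simps)
  with balanced have "total_edge_product_cordial_labeling (V, E) (vanishing_on Z)"
    using \<open>finite V\<close> \<open>finite E\<close> \<open>Z \<subseteq> E\<close>
    by (simp add: total_edge_product_cordial_labeling_vanishing_on_iff)
  moreover have "corona (path_graph n) (cycle_graph m) = (V, E)"
    unfolding V_def E_def
    by (simp add: prod_eq_iff vertices_corona_path_cycle edges_corona_path_cycle)
  ultimately show ?thesis
    unfolding total_edge_product_cordial_def by auto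
qed

theorem theorem3p2:
  fixes n m :: nat
  assumes "n \<ge> 1" and "m \<ge> 3"
  shows "total_edge_product_cordial (corona (path_graph n) (cycle_graph m))"
proof (cases "even m")
  case True
  then obtain q where "m = 2 * q" by blast
  with assms show ?thesis
    by (intro total_edge_product_cordial_corona_path_cycle_if_balanced[of n m q "q - 1" 0]) auto
next
  case False
  then obtain q where m: "m = 2 * q + 1" using oddE by blast
  have "\<bar>- int n + 2 * int (n div 2) + 1\<bar> \<le> 1" by linarith
  with assms show ?thesis unfolding m
    by (intro total_edge_product_cordial_corona_path_cycle_if_balanced[of n _ q q "n div 2"])
      (auto simp: algebra_simps)
qed

end
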